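(* Let $a,b,c\in\mathbb{R}$ with $c\neq 0$, and let $c_{1,2}=-\frac{2}{27}a^3+\frac13 ab\pm\frac{2}{27}\sqrt{(a^2-3b)^3}$ (defined when $b\le a^2/3$; upper sign for $c_1$). The cubic $x^3+ax^2+bx+c$ has three negative real roots (counted with multiplicity) if and only if $a>0$ and either (i) $0<b\le a^2/4$ and $0<c\le c_1$, or (ii) $a^2/4<b\le a^2/3$ and $0<c_2\le c\le c_1$. *)

theory Defs
  imports "HOL-Computational_Algebra.Polynomial"
begin

definition cubic_c1 :: "real \<Rightarrow> real \<Rightarrow> real" where
  "cubic_c1 a b = - 2/27 * a^3 + 1/3 * a * b + 2/27 * sqrt ((a^2 - 3*b)^3)"

definition cubic_c2 :: "real \<Rightarrow> real \<Rightarrow> real" where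
  "cubic_c2 a b = - 2/27 * a^3 + 1/3 * a * b - 2/27 * sqrt ((a^2 - 3*b)^3)"

definition three_neg_roots :: "real poly \<Rightarrow> bool" where
  "three_neg_roots p \<longleftrightarrow> (\<exists>r1 r2 r3. r1 < 0 \<and> r2 < 0 \<and> r3 < 0 \<and>
      p = [:-r1, 1:] * [:-r2, 1:] * [:-r3, 1:])"

end

theory Submission
  imports Defs
begin

(* A real cubic x^3 + a x^2 + b x + c has three real roots iff its discriminant is nonnegative,
   and its real roots are all negative iff a, b, c > 0 (Vieta in one direction, positivity of the
   cubic on [0, oo) in the other). Viewed as a quadratic in c, the discriminant
   is 4 (a^2 - 3b)^3 - (27c + 2a^3 - 9ab)^2 up to the factor 27, whose roots are exactly c_1 and
   c_2; so it is nonnegative iff b <= a^2/3 and c_2 <= c <= c_1. Finally 27 c_2 = (a - 2s)(a + s)^2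
   with s = sqrt (a^2 - 3b), so c_2 <= 0 iff b <= a^2/4, which makes the conditions b > 0, c > 0
   redundant in case (ii) and c >= c_2 redundant in case (i). *)

definition cubic_discr :: "real \<Rightarrow> real \<Rightarrow> real \<Rightarrow> real" where
  "cubic_discr a b c = 18*a*b*c - 4*a^3*c + a^2*b^2 - 4*b^3 - 27*c^2"

lemma monic_cubic_eq_linear_prod_iff:
  "[:c, b, a, 1:] = [:-r1, 1:] * [:-r2, 1:] * [:-r3, 1::real:] \<longleftrightarrow>
    a = -(r1 + r2 + r3) \<and> b = r1*r2 + r1*r3 + r2*r3 \<and> c = -(r1*r2*r3)"
  by (auto simp: algebra_simps)

lemma cubic_discr_vieta:
  "cubic_discr (-(r1 + r2 + r3)) (r1*r2 + r1*r3 + r2*r3) (-(r1*r2*r3)) =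
    ((r1 - r2) * (r1 - r3) * (r2 - r3))^2"
  unfolding cubic_discr_def by algebra

lemma cubic_discr_completed_square:
  "27 * cubic_discr a b c = 4 * (a^2 - 3*b)^3 - (27*c + 2*a^3 - 9*a*b)^2"
  unfolding cubic_discr_def by algebra

lemma cubic_discr_nonneg_iff:
  "cubic_discr a b c \<ge> 0 \<longleftrightarrow> b \<le> a^2/3 \<and> cubic_c2 a b \<le> c \<and> c \<le> cubic_c1 a b"
proof (cases "b \<le> a^2/3")
  case False
  then have "(a^2 - 3*b)^3 < 0" by simp
  then show ?thesis
    using cubic_discr_completed_square[of a b c] False
    by (smt (verit) zero_le_power2)
next
  case True
  define w where "w = 2 * sqrt ((a^2 - 3*b)^3)"
  have w: "w \<ge> 0" "w^2 = 4 * (a^2 - 3*b)^3"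
    using True by (simp_all add: w_def power_mult_distrib)
  have "cubic_discr a b c \<ge> 0 \<longleftrightarrow> (27*c + 2*a^3 - 9*a*b)^2 \<le> w^2"
    using cubic_discr_completed_square[of a b c] w by linarith
  also have "\<dots> \<longleftrightarrow> \<bar>27*c + 2*a^3 - 9*a*b\<bar> \<le> w"
    using w(1) by (simp add: power2_le_iff_abs_le)
  also have "\<dots> \<longleftrightarrow> cubic_c2 a b \<le> c \<and> c \<le> cubic_c1 a b"
    unfolding cubic_c1_def cubic_c2_def w_def by (auto simp: abs_le_iff field_simps)
  finally show ?thesis using True by simp
qed

lemma cubic_c2_nonpos_iff:
  assumes "a > 0" "b \<le> a^2/3"
  shows "cubic_c2 a b \<le> 0 \<longleftrightarrow> b \<le> a^2/4"
proof -
  define s where "s = sqrt (a^2 - 3*b)"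
  have s: "s \<ge> 0" "s^2 = a^2 - 3*b" using assms(2) by (simp_all add: s_def)
  have "sqrt ((a^2 - 3*b)^3) = s^3"
    by (simp add: s_def real_sqrt_power)
  then have "27 * cubic_c2 a b = (a - 2*s) * (a + s)^2"
    unfolding cubic_c2_def using s(2) by (simp add: field_simps) algebra
  moreover have "(a + s)^2 > 0" using assms(1) s(1) by simp
  ultimately have "cubic_c2 a b \<le> 0 \<longleftrightarrow> a \<le> 2*s"
    by (smt (verit) mult_le_0_iff)
  also have "\<dots> \<longleftrightarrow> a^2 \<le> (2*s)^2"
    using power2_le_iff_abs_le[of "2*s" a] assms(1) s(1) by simp
  also have "\<dots> \<longleftrightarrow> b \<le> a^2/4"
    using s(2) by (simp add: power_mult_distrib mult.commute)
  finally show ?thesis .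
qed

lemma poly_root_neg_if_coeffs_pos:
  fixes p :: "real poly"
  assumes "\<And>i. coeff p i \<ge> 0" "coeff p 0 > 0" "poly p x = 0"
  shows "x < 0"
proof (rule ccontr)
  assume "\<not> x < 0"
  then have "coeff p 0 * x^0 \<le> (\<Sum>i\<le>degree p. coeff p i * x^i)"
    using assms(1) by (intro member_le_sum) auto
  then show False using assms(2,3) by (simp add: poly_altdef)
qed

lemma monic_cubic_pos_at_large:
  fixes a b c M :: real
  assumes "M \<ge> 1 + \<bar>a\<bar> + \<bar>b\<bar> + \<bar>c\<bar>"
  shows "poly [:c, b, a, 1:] M > 0"
proof -
  have "M \<ge> 1" using assms by simp
  then have M: "0 \<le> M" "M \<le> M^2" "1 \<le> M^2"
    using mult_left_mono[of 1 M M] one_le_power[of M 2] by (simp_all add: power2_eq_square)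
  have "- \<bar>a\<bar> * M^2 \<le> a * M^2"
    using mult_right_mono[of "- \<bar>a\<bar>" a "M^2"] by simp
  moreover have "- \<bar>b\<bar> * M^2 \<le> b * M"
    using mult_left_mono[of M "M^2" "\<bar>b\<bar>"] M abs_ge_minus_self[of "b * M"]
    by (simp add: abs_mult)
  moreover have "- \<bar>c\<bar> * M^2 \<le> c"
    using mult_left_mono[of 1 "M^2" "\<bar>c\<bar>"] M by simp
  moreover have "(\<bar>a\<bar> + \<bar>b\<bar> + \<bar>c\<bar>) * M^2 \<le> (M - 1) * M^2"
    using assms by (intro mult_right_mono) auto
  moreover have "poly [:c, b, a, 1:] M = M * M^2 + a * M^2 + b * M + c"
    by (simp add: algebra_simps power2_eq_square)
  ultimately have "M^2 \<le> poly [:c, b, a, 1:] M"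
    by (simp add: algebra_simps)
  then show ?thesis using M by simp
qed

lemma monic_cubic_has_root: "\<exists>r. poly [:c, b, a, 1::real:] r = 0"
proof -
  define M where "M = 1 + \<bar>a\<bar> + \<bar>b\<bar> + \<bar>c\<bar>"
  have "poly [:-c, b, -a, 1:] M > 0"
    by (rule monic_cubic_pos_at_large) (simp add: M_def)
  then have "poly [:c, b, a, 1:] (-M) < 0"
    by (simp add: algebra_simps)
  moreover have "poly [:c, b, a, 1:] M > 0"
    by (rule monic_cubic_pos_at_large) (simp add: M_def)
  moreover have "-M < M" by (simp add: M_def)
  ultimately show ?thesis
    using poly_IVT_pos by blast
qed

lemma monic_quadratic_splits:
  assumes "4*f \<le> e^2"
  shows "\<exists>t1 t2. [:f, e, 1::real:] = [:-t1, 1:] * [:-t2, 1:]"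
proof -
  define d where "d = sqrt (e^2 - 4*f)"
  have "d^2 = e^2 - 4*f" using assms by (simp add: d_def)
  then have "[:f, e, 1:] = [:-((-e + d)/2), 1:] * [:-((-e - d)/2), 1:]"
    by (simp add: field_simps power2_eq_square)
  then show ?thesis by blast
qed

lemma monic_cubic_splits_if_discr_nonneg:
  assumes "cubic_discr a b c \<ge> 0"
  shows "\<exists>r1 r2 r3. [:c, b, a, 1:] = [:-r1, 1:] * [:-r2, 1:] * [:-r3, 1::real:]"
proof -
  obtain r where root: "poly [:c, b, a, 1:] r = 0"
    using monic_cubic_has_root by blast
  define e where "e = a + r"
  define f where "f = b + r*e"
  have abc: "a = e - r" "b = f - r*e" "c = -(r*f)"
    using root by (simp_all add: e_def f_def algebra_simps)
  have factor: "[:c, b, a, 1:] = [:-r, 1:] * [:f, e, 1:]"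
    by (simp add: abc)
  have discr: "cubic_discr a b c = (e^2 - 4*f) * (r^2 + e*r + f)^2"
    unfolding abc cubic_discr_def by algebra
  have "4*f \<le> e^2"
  proof (cases "r^2 + e*r + f = 0")
    case True
    then have "e^2 - 4*f = (2*r + e)^2"
      by algebra
    then show ?thesis
      by (metis diff_ge_0_iff_ge zero_le_power2)
  next
    case False
    then show ?thesis using assms discr by (simp add: zero_le_mult_iff)
  qed
  then obtain t1 t2 where "[:f, e, 1:] = [:-t1, 1:] * [:-t2, 1:]"
    using monic_quadratic_splits by blast
  then show ?thesis
    using factor by (metis mult.assoc)
qed

lemma three_neg_roots_iff_discr_nonneg:
  "three_neg_roots [:c, b, a, 1:] \<longleftrightarrow> a > 0 \<and> b > 0 \<and> c > 0 \<and> cubic_discr a b c \<ge> 0"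
proof
  assume "three_neg_roots [:c, b, a, 1:]"
  then obtain r1 r2 r3 where neg: "r1 < 0" "r2 < 0" "r3 < 0"
    and vieta: "a = -(r1 + r2 + r3)" "b = r1*r2 + r1*r3 + r2*r3" "c = -(r1*r2*r3)"
    unfolding three_neg_roots_def monic_cubic_eq_linear_prod_iff by blast
  have "r1*r2*r3 < 0" using neg by (simp add: mult_neg_neg mult_pos_neg)
  then show "a > 0 \<and> b > 0 \<and> c > 0 \<and> cubic_discr a b c \<ge> 0"
    using neg unfolding vieta cubic_discr_vieta by (simp add: mult_neg_neg add_pos_pos)
next
  assume pos: "a > 0 \<and> b > 0 \<and> c > 0 \<and> cubic_discr a b c \<ge> 0"
  then obtain r1 r2 r3 where split: "[:c, b, a, 1:] = [:-r1, 1:] * [:-r2, 1:] * [:-r3, 1:]"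
    using monic_cubic_splits_if_discr_nonneg by blast
  have coeffs: "coeff [:c, b, a, 1:] i \<ge> 0" for i
    using pos by (auto simp: coeff_pCons split: nat.split)
  have "poly [:c, b, a, 1:] r = 0 \<Longrightarrow> r < 0" for r
    by (rule poly_root_neg_if_coeffs_pos[OF coeffs]) (use pos in simp_all)
  moreover have "poly [:c, b, a, 1:] r1 = 0" "poly [:c, b, a, 1:] r2 = 0" "poly [:c, b, a, 1:] r3 = 0"
    unfolding split poly_mult by simp_all
  ultimately have "r1 < 0" "r2 < 0" "r3 < 0"
    by blast+
  then show "three_neg_roots [:c, b, a, 1:]"
    unfolding three_neg_roots_def using split by blast
qed

theorem mainTheorem6:
  fixes a b c :: real
  assumes "c \<noteq> 0"
  shows "three_neg_roots [:c, b, a, 1:] \<longleftrightarrow>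
    (a > 0 \<and>
      ((0 < b \<and> b \<le> a^2/4 \<and> 0 < c \<and> c \<le> cubic_c1 a b) \<or>
       (a^2/4 < b \<and> b \<le> a^2/3 \<and> 0 < cubic_c2 a b \<and> cubic_c2 a b \<le> c \<and> c \<le> cubic_c1 a b)))"
proof -
  have "a^2/4 \<le> a^2/3" by simp
  moreover have "cubic_c2 a b \<le> 0 \<longleftrightarrow> b \<le> a^2/4" if "a > 0" "b \<le> a^2/3"
    using cubic_c2_nonpos_iff that by blast
  ultimately show ?thesis
    unfolding three_neg_roots_iff_discr_nonneg cubic_discr_nonneg_iff by fastforce
qed

end
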